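(* Let $G,\sigma\ge0$ with $G+\sigma>0$, $\lambda>0$, $C_{\mathbf{x}}\ge0$, and $\varepsilon>0$ with $\varepsilon\le\frac72(G+\sigma)$. Set $\beta_\star=1-\left(\frac{\varepsilon}{7(G+\sigma)}\right)^2$, $D_\star=\frac14\lambda^{-1/2}\varepsilon^{1/2}\left(1+\frac{49(G+\sigma)^2}{\varepsilon^2}\sqrt{C_{\mathbf{x}}}\right)^{-1}$, $\mu_\star=2\lambda^{1/2}\varepsilon^{1/2}\left(1+\frac{49(G+\sigma)^2}{\varepsilon^2}\sqrt{C_{\mathbf{x}}}\right)$, $\eta_\star=\frac{2}{G+\sigma}D_\star\sqrt{1-\beta_\star}$ and $\zeta_\star=\frac{\beta_\star}{1+\eta_\star\mu_\star}$. Then $1-\zeta_\star=\Theta\!\left(\frac{\varepsilon^2}{(G+\sigma)^2}\right)$ (with absolute constants). Consequently, every $\kappa\in[\zeta_\star,1]$ satisfies $1-\Theta\!\left(\frac{\varepsilon^2}{(G+\sigma)^2}\right)\le\kappa\le1$, and the step size $\gamma=\frac{\eta_\star}{1-\zeta_\star}$ equals $\Theta\!\left(\frac{(G+\sigma)^2}{\varepsilon^2}\right)\cdot\eta_\star$.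
   Context: In the paper these are the parameters of the conversion scheme equivalent to schedule-free SGD, where $C_{\mathbf{x}}$ is the iterate stability factor of the run, $\kappa_t$ is drawn uniformly from $[\zeta_\star,1]$ and $\gamma$ is the step size of the base SGD trajectory. *)

theory Defs
  imports Complex_Main
begin

definition beta_star :: "real \<Rightarrow> real \<Rightarrow> real \<Rightarrow> real" where
  "beta_star G \<sigma> \<epsilon> = 1 - (\<epsilon> / (7 * (G + \<sigma>)))^2"

definition D_star :: "real \<Rightarrow> real \<Rightarrow> real \<Rightarrow> real \<Rightarrow> real \<Rightarrow> real" where
  "D_star G \<sigma> lam Cx \<epsilon> =
     (1/4) * lam powr (-1/2) * sqrt \<epsilon> / (1 + 49 * (G + \<sigma>)^2 / \<epsilon>^2 * sqrt Cx)"

definition mu_star :: "real \<Rightarrow> real \<Rightarrow> real \<Rightarrow> real \<Rightarrow> real \<Rightarrow> real" where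
  "mu_star G \<sigma> lam Cx \<epsilon> =
     2 * sqrt lam * sqrt \<epsilon> * (1 + 49 * (G + \<sigma>)^2 / \<epsilon>^2 * sqrt Cx)"

definition eta_star :: "real \<Rightarrow> real \<Rightarrow> real \<Rightarrow> real \<Rightarrow> real \<Rightarrow> real" where
  "eta_star G \<sigma> lam Cx \<epsilon> =
     2 / (G + \<sigma>) * D_star G \<sigma> lam Cx \<epsilon> * sqrt (1 - beta_star G \<sigma> \<epsilon>)"

definition zeta_star :: "real \<Rightarrow> real \<Rightarrow> real \<Rightarrow> real \<Rightarrow> real \<Rightarrow> real" where
  "zeta_star G \<sigma> lam Cx \<epsilon> =
     beta_star G \<sigma> \<epsilon> / (1 + eta_star G \<sigma> lam Cx \<epsilon> * mu_star G \<sigma> lam Cx \<epsilon>)"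

end

theory Submission
  imports Defs
begin

text \<open>Write \<open>r = \<epsilon>\<^sup>2 / (G + \<sigma>)\<^sup>2\<close>. In the product \<open>D\<^sub>\<star> \<mu>\<^sub>\<star>\<close> the powers of \<open>\<lambda>\<close> and the
  factor involving \<open>C\<^sub>x\<close> cancel, leaving \<open>\<epsilon>/2\<close>; hence \<open>\<eta>\<^sub>\<star> \<mu>\<^sub>\<star> = r/7\<close>, while
  \<open>\<beta>\<^sub>\<star> = 1 - r/49\<close>. So \<open>1 - \<zeta>\<^sub>\<star> = 8r / (49 + 7r)\<close> exactly, and the hypothesis on \<open>\<epsilon>\<close>
  means \<open>r \<le> 49/4\<close>, which traps the denominator between \<open>49\<close> and \<open>539/4\<close>.\<close>

lemma D_star_mult_mu_star:
  fixes G \<sigma> lam Cx \<epsilon> :: real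
  assumes "0 < lam" "0 \<le> Cx" "0 < \<epsilon>"
  shows "D_star G \<sigma> lam Cx \<epsilon> * mu_star G \<sigma> lam Cx \<epsilon> = \<epsilon> / 2"
proof -
  define A where "A = 1 + 49 * (G + \<sigma>)^2 / \<epsilon>^2 * sqrt Cx"
  have "A > 0"
    using assms unfolding A_def by (simp add: add_pos_nonneg)
  have "lam powr (-1/2) * sqrt lam = 1"
    using assms by (simp add: powr_half_sqrt[symmetric] powr_add[symmetric])
  moreover have "sqrt \<epsilon> * sqrt \<epsilon> = \<epsilon>"
    using assms by simp
  ultimately show ?thesis
    using \<open>A > 0\<close> unfolding D_star_def mu_star_def A_def[symmetric]
    by (simp add: field_simps)
qed

lemma D_star_pos:
  fixes G \<sigma> lam Cx \<epsilon> :: real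
  assumes "0 < lam" "0 \<le> Cx" "0 < \<epsilon>"
  shows "0 < D_star G \<sigma> lam Cx \<epsilon>"
  using assms by (simp add: D_star_def add_pos_nonneg)

lemma eta_star_eq:
  fixes G \<sigma> lam Cx \<epsilon> :: real
  assumes "0 < G + \<sigma>" "0 < \<epsilon>"
  shows "eta_star G \<sigma> lam Cx \<epsilon> = 2 * \<epsilon> / (7 * (G + \<sigma>)^2) * D_star G \<sigma> lam Cx \<epsilon>"
proof -
  define S where "S = G + \<sigma>"
  have "sqrt (1 - beta_star G \<sigma> \<epsilon>) = \<bar>\<epsilon> / (7 * S)\<bar>"
    unfolding S_def by (subst real_sqrt_abs[symmetric]) (simp add: beta_star_def)
  then show ?thesis
    using assms unfolding eta_star_def S_def[symmetric] by (simp add: field_simps power2_eq_square)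
qed

lemma eta_star_pos:
  fixes G \<sigma> lam Cx \<epsilon> :: real
  assumes "0 < G + \<sigma>" "0 < lam" "0 \<le> Cx" "0 < \<epsilon>"
  shows "0 < eta_star G \<sigma> lam Cx \<epsilon>"
  using assms D_star_pos[OF assms(2-4)] by (simp add: eta_star_eq)

lemma ratio_le_49_div_4:
  fixes G \<sigma> \<epsilon> :: real
  assumes "0 < G + \<sigma>" "0 < \<epsilon>" "\<epsilon> \<le> 7/2 * (G + \<sigma>)"
  shows "\<epsilon>^2 / (G + \<sigma>)^2 \<le> 49/4"
proof -
  define S where "S = G + \<sigma>"
  have "\<epsilon>^2 \<le> (7/2 * S)^2"
    using assms unfolding S_def by (intro power_mono) auto
  then show ?thesis
    using assms(1) unfolding S_def[symmetric] by (simp add: field_simps power2_eq_square)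
qed

lemma one_minus_zeta_star_eq:
  fixes G \<sigma> lam Cx \<epsilon> :: real
  assumes "0 < G + \<sigma>" "0 < lam" "0 \<le> Cx" "0 < \<epsilon>"
  defines "r \<equiv> \<epsilon>^2 / (G + \<sigma>)^2"
  shows "1 - zeta_star G \<sigma> lam Cx \<epsilon> = 8 * r / (49 + 7 * r)"
proof -
  have "r > 0"
    using assms by (simp add: r_def)
  have beta: "beta_star G \<sigma> \<epsilon> = 1 - r / 49"
    by (simp add: beta_star_def r_def power_divide power2_eq_square algebra_simps)
  have "eta_star G \<sigma> lam Cx \<epsilon> * mu_star G \<sigma> lam Cx \<epsilon>
      = 2 * \<epsilon> / (7 * (G + \<sigma>)^2) * (D_star G \<sigma> lam Cx \<epsilon> * mu_star G \<sigma> lam Cx \<epsilon>)"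
    using assms by (simp add: eta_star_eq)
  then have eta_mu: "eta_star G \<sigma> lam Cx \<epsilon> * mu_star G \<sigma> lam Cx \<epsilon> = r / 7"
    using D_star_mult_mu_star[OF assms(2-4)] by (simp add: r_def power2_eq_square)
  show ?thesis
    using \<open>r > 0\<close> unfolding zeta_star_def beta eta_mu by (simp add: field_simps)
qed

lemma zeta_star_bounds:
  fixes G \<sigma> lam Cx \<epsilon> :: real
  assumes "0 < G + \<sigma>" "0 < lam" "0 \<le> Cx" "0 < \<epsilon>" "\<epsilon> \<le> 7/2 * (G + \<sigma>)"
  defines "r \<equiv> \<epsilon>^2 / (G + \<sigma>)^2"
  shows one_minus_zeta_star_ge: "1/20 * r \<le> 1 - zeta_star G \<sigma> lam Cx \<epsilon>"
    and one_minus_zeta_star_le: "1 - zeta_star G \<sigma> lam Cx \<epsilon> \<le> 1/6 * r"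
    and inverse_one_minus_zeta_star_ge: "6 / r \<le> 1 / (1 - zeta_star G \<sigma> lam Cx \<epsilon>)"
    and inverse_one_minus_zeta_star_le: "1 / (1 - zeta_star G \<sigma> lam Cx \<epsilon>) \<le> 17 / r"
proof -
  have "0 < r" "r \<le> 49/4"
    using assms ratio_le_49_div_4 by (simp_all add: r_def)
  then show "1/20 * r \<le> 1 - zeta_star G \<sigma> lam Cx \<epsilon>" "1 - zeta_star G \<sigma> lam Cx \<epsilon> \<le> 1/6 * r"
      "6 / r \<le> 1 / (1 - zeta_star G \<sigma> lam Cx \<epsilon>)" "1 / (1 - zeta_star G \<sigma> lam Cx \<epsilon>) \<le> 17 / r"
    unfolding one_minus_zeta_star_eq[OF assms(1-4), folded r_def] by (simp_all add: field_simps)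
qed

lemma step_size_bounds:
  fixes G \<sigma> lam Cx \<epsilon> :: real
  assumes "0 < G + \<sigma>" "0 < lam" "0 \<le> Cx" "0 < \<epsilon>" "\<epsilon> \<le> 7/2 * (G + \<sigma>)"
  defines "r \<equiv> \<epsilon>^2 / (G + \<sigma>)^2"
  shows "6 / r * eta_star G \<sigma> lam Cx \<epsilon> \<le> eta_star G \<sigma> lam Cx \<epsilon> / (1 - zeta_star G \<sigma> lam Cx \<epsilon>)"
    and "eta_star G \<sigma> lam Cx \<epsilon> / (1 - zeta_star G \<sigma> lam Cx \<epsilon>) \<le> 17 / r * eta_star G \<sigma> lam Cx \<epsilon>"
proof -
  have \<eta>: "0 \<le> eta_star G \<sigma> lam Cx \<epsilon>"
    using eta_star_pos[OF assms(1-4)] by simp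
  show "6 / r * eta_star G \<sigma> lam Cx \<epsilon> \<le> eta_star G \<sigma> lam Cx \<epsilon> / (1 - zeta_star G \<sigma> lam Cx \<epsilon>)"
    using mult_right_mono[OF inverse_one_minus_zeta_star_ge[OF assms(1-5), folded r_def] \<eta>] by simp
  show "eta_star G \<sigma> lam Cx \<epsilon> / (1 - zeta_star G \<sigma> lam Cx \<epsilon>) \<le> 17 / r * eta_star G \<sigma> lam Cx \<epsilon>"
    using mult_right_mono[OF inverse_one_minus_zeta_star_le[OF assms(1-5), folded r_def] \<eta>] by simp
qed

theorem proposition3:
  shows "\<exists>c1 c2 c3 c4 :: real. 0 < c1 \<and> 0 < c2 \<and> 0 < c3 \<and> 0 < c4 \<and>
    (\<forall>G \<sigma> lam Cx \<epsilon> :: real.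
       0 \<le> G \<and> 0 \<le> \<sigma> \<and> 0 < G + \<sigma> \<and> 0 < lam \<and> 0 \<le> Cx \<and> 0 < \<epsilon> \<and>
       \<epsilon> \<le> 7/2 * (G + \<sigma>) \<longrightarrow>
       (let \<zeta> = zeta_star G \<sigma> lam Cx \<epsilon>; \<eta> = eta_star G \<sigma> lam Cx \<epsilon>;
            r = \<epsilon>^2 / (G + \<sigma>)^2 in
         c1 * r \<le> 1 - \<zeta> \<and> 1 - \<zeta> \<le> c2 * r \<and>
         (\<forall>\<kappa>. \<zeta> \<le> \<kappa> \<and> \<kappa> \<le> 1 \<longrightarrow> 1 - c2 * r \<le> \<kappa> \<and> \<kappa> \<le> 1) \<and>
         c3 / r * \<eta> \<le> \<eta> / (1 - \<zeta>) \<and> \<eta> / (1 - \<zeta>) \<le> c4 / r * \<eta>))"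
proof (rule exI[of _ "1/20"], rule exI[of _ "1/6"], rule exI[of _ 6], rule exI[of _ 17],
       intro conjI allI impI; (elim conjE)?)
  fix G \<sigma> lam Cx \<epsilon> :: real
  assume "0 \<le> G" "0 \<le> \<sigma>"
    and hyps: "0 < G + \<sigma>" "0 < lam" "0 \<le> Cx" "0 < \<epsilon>" "\<epsilon> \<le> 7/2 * (G + \<sigma>)"
  show "let \<zeta> = zeta_star G \<sigma> lam Cx \<epsilon>; \<eta> = eta_star G \<sigma> lam Cx \<epsilon>; r = \<epsilon>^2 / (G + \<sigma>)^2 in
      1/20 * r \<le> 1 - \<zeta> \<and> 1 - \<zeta> \<le> 1/6 * r \<and>
      (\<forall>\<kappa>. \<zeta> \<le> \<kappa> \<and> \<kappa> \<le> 1 \<longrightarrow> 1 - 1/6 * r \<le> \<kappa> \<and> \<kappa> \<le> 1) \<and>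
      6 / r * \<eta> \<le> \<eta> / (1 - \<zeta>) \<and> \<eta> / (1 - \<zeta>) \<le> 17 / r * \<eta>"
    using one_minus_zeta_star_ge[OF hyps] one_minus_zeta_star_le[OF hyps] step_size_bounds[OF hyps]
    unfolding Let_def by auto
qed simp_all

end
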